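(* Let $(\mathcal S,\mathcal A,P,r)$ be a finite MDP such that $\mathcal P^\pi g^\star=g^\star$ for every policy $\pi$, and let $(g^\star,h^\star)$ be a solution of the modified Bellman equations. Let $V^0\in\mathbb R^n$, $V^k=\frac{2}{k+2}V^0+\frac{k}{k+2}TV^{k-1}$ for $k\ge1$, and let $\pi_k$ be greedy policies, $T^{\pi_k}V^k=TV^k$. Then for every $k\ge1$, \[\|g^\star-g^{\pi_k}\|_\infty\le\|TV^k-V^k-g^\star\|_\infty\le\frac{8}{k+1}\|V^0-h^\star\|_\infty.\]
   Context: An MDP $(\mathcal S,\mathcal A,P,r)$ has finite state space $\mathcal S$ ($|\mathcal S|=n$, functions identified with $\mathbb R^n$), finite action space, transition probabilities $P(s'\mid s,a)$ and bounded reward $r$. For a policy $\pi$: $r^\pi(s)=\sum_a\pi(a\mid s)r(s,a)$, $\mathcal P^\pi(s,s')=\sum_a\pi(a\mid s)P(s'\mid s,a)$, $g^\pi(s)=\liminf_{T\to\infty}\frac1T\mathbb E_\pi[\sum_{t=0}^{T-1}r(s_t,a_t)\mid s_0=s]$, $g^\star=\max_\pi g^\pi$. $T^\pi V=r^\pi+\mathcal P^\pi V$, $(TV)(s)=\max_a\{r(s,a)+\sum_{s'}P(s'\mid s,a)V(s')\}$. A pair $(g,h)$ solves the modified Bellman equations if $\max_a\sum_{s'}P(s'\mid s,a)g(s')=g(s)$ and $\max_a\{r(s,a)+\sum_{s'}P(s'\mid s,a)h(s')\}=h(s)+g(s)$ for all $s$, with some policy attaining both maxima simultaneously; the first component of any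 solution equals $g^\star$. *)

theory Defs
  imports "HOL-Analysis.Analysis" "HOL-Library.Extended_Real"
begin

definition is_mdp :: "('s::finite \<Rightarrow> 'a::finite \<Rightarrow> 's \<Rightarrow> real) \<Rightarrow> bool" where
  "is_mdp P \<longleftrightarrow> (\<forall>s a s'. P s a s' \<ge> 0) \<and> (\<forall>s a. (\<Sum>s'\<in>UNIV. P s a s') = 1)"

definition is_policy :: "('s::finite \<Rightarrow> 'a::finite \<Rightarrow> real) \<Rightarrow> bool" where
  "is_policy \<pi> \<longleftrightarrow> (\<forall>s a. \<pi> s a \<ge> 0) \<and> (\<forall>s. (\<Sum>a\<in>UNIV. \<pi> s a) = 1)"

definition r_pol :: "('s::finite \<Rightarrow> 'a::finite \<Rightarrow> real) \<Rightarrow> ('s \<Rightarrow> 'a \<Rightarrow> real) \<Rightarrow> 's \<Rightarrow> real" where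
  "r_pol r \<pi> s = (\<Sum>a\<in>UNIV. \<pi> s a * r s a)"

definition P_pol :: "('s::finite \<Rightarrow> 'a::finite \<Rightarrow> 's \<Rightarrow> real) \<Rightarrow> ('s \<Rightarrow> 'a \<Rightarrow> real) \<Rightarrow> 's \<Rightarrow> 's \<Rightarrow> real" where
  "P_pol P \<pi> s s' = (\<Sum>a\<in>UNIV. \<pi> s a * P s a s')"

definition apply_P :: "('s::finite \<Rightarrow> 's \<Rightarrow> real) \<Rightarrow> ('s \<Rightarrow> real) \<Rightarrow> 's \<Rightarrow> real" where
  "apply_P M V s = (\<Sum>s'\<in>UNIV. M s s' * V s')"

definition T_pol :: "('s::finite \<Rightarrow> 'a::finite \<Rightarrow> 's \<Rightarrow> real) \<Rightarrow> ('s \<Rightarrow> 'a \<Rightarrow> real)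
    \<Rightarrow> ('s \<Rightarrow> 'a \<Rightarrow> real) \<Rightarrow> ('s \<Rightarrow> real) \<Rightarrow> 's \<Rightarrow> real" where
  "T_pol P r \<pi> V s = r_pol r \<pi> s + apply_P (P_pol P \<pi>) V s"

definition T_opt :: "('s::finite \<Rightarrow> 'a::finite \<Rightarrow> 's \<Rightarrow> real) \<Rightarrow> ('s \<Rightarrow> 'a \<Rightarrow> real)
    \<Rightarrow> ('s \<Rightarrow> real) \<Rightarrow> 's \<Rightarrow> real" where
  "T_opt P r V s = Max (range (\<lambda>a. r s a + (\<Sum>s'\<in>UNIV. P s a s' * V s')))"

fun state_dist :: "('s::finite \<Rightarrow> 'a::finite \<Rightarrow> 's \<Rightarrow> real) \<Rightarrow> ('s \<Rightarrow> 'a \<Rightarrow> real)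
    \<Rightarrow> 's \<Rightarrow> nat \<Rightarrow> 's \<Rightarrow> real" where
  "state_dist P \<pi> s0 0 s = (if s = s0 then 1 else 0)"
| "state_dist P \<pi> s0 (Suc t) s = (\<Sum>s''\<in>UNIV. state_dist P \<pi> s0 t s'' * P_pol P \<pi> s'' s)"

definition exp_reward :: "('s::finite \<Rightarrow> 'a::finite \<Rightarrow> 's \<Rightarrow> real) \<Rightarrow> ('s \<Rightarrow> 'a \<Rightarrow> real)
    \<Rightarrow> ('s \<Rightarrow> 'a \<Rightarrow> real) \<Rightarrow> 's \<Rightarrow> nat \<Rightarrow> real" where
  "exp_reward P r \<pi> s0 t = (\<Sum>s\<in>UNIV. state_dist P \<pi> s0 t s * r_pol r \<pi> s)"

definition gain :: "('s::finite \<Rightarrow> 'a::finite \<Rightarrow> 's \<Rightarrow> real) \<Rightarrow> ('s \<Rightarrow> 'a \<Rightarrow> real)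
    \<Rightarrow> ('s \<Rightarrow> 'a \<Rightarrow> real) \<Rightarrow> 's \<Rightarrow> real" where
  "gain P r \<pi> s = real_of_ereal (liminf (\<lambda>T::nat. ereal ((1 / real T) * (\<Sum>t<T. exp_reward P r \<pi> s t))))"

definition opt_gain :: "('s::finite \<Rightarrow> 'a::finite \<Rightarrow> 's \<Rightarrow> real) \<Rightarrow> ('s \<Rightarrow> 'a \<Rightarrow> real) \<Rightarrow> 's \<Rightarrow> real" where
  "opt_gain P r s = (SUP \<pi>\<in>{\<pi>. is_policy \<pi>}. gain P r \<pi> s)"

definition supnorm :: "('s::finite \<Rightarrow> real) \<Rightarrow> real" where
  "supnorm V = Max (range (\<lambda>s. \<bar>V s\<bar>))"

definition modified_bellman :: "('s::finite \<Rightarrow> 'a::finite \<Rightarrow> 's \<Rightarrow> real) \<Rightarrow> ('s \<Rightarrow> 'a \<Rightarrow> real)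
    \<Rightarrow> ('s \<Rightarrow> real) \<Rightarrow> ('s \<Rightarrow> real) \<Rightarrow> bool" where
  "modified_bellman P r g h \<longleftrightarrow>
     (\<forall>s. Max (range (\<lambda>a. \<Sum>s'\<in>UNIV. P s a s' * g s')) = g s) \<and>
     (\<forall>s. Max (range (\<lambda>a. r s a + (\<Sum>s'\<in>UNIV. P s a s' * h s'))) = h s + g s) \<and>
     (\<exists>\<pi>. is_policy \<pi> \<and>
        (\<forall>s. (\<Sum>a\<in>UNIV. \<pi> s a * (\<Sum>s'\<in>UNIV. P s a s' * g s')) = g s) \<and>
        (\<forall>s. (\<Sum>a\<in>UNIV. \<pi> s a * (r s a + (\<Sum>s'\<in>UNIV. P s a s' * h s'))) = h s + g s))"

end

theory Submission
  imports Defs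
begin

(* First inequality: for a greedy policy pi, r^pi = V + g* + e - P^pi V with
   e = TV - V - g*.  Averaged along the Markov chain of pi, the V-terms telescope and
   P^pi g* = g* reproduces g*, so the Cesaro averages of the rewards stay within
   ||e|| + O(1/T) of g*, and so does their liminf g^pi.

   Second inequality: since every action leaves g* invariant, T commutes with adding
   multiples of g*, and W_k = V^k - (k/3) g* is the anchored (Halpern) iteration
   W_k = 2/(k+2) W_0 + k/(k+2) F W_(k-1) of the nonexpansive map F = T - g*, whose fixed
   point is h*.  Along such an iteration ||W_k - h*|| <= ||W_0 - h*||, by induction
   consecutive iterates differ by at most 4 ||W_0 - h*|| / (k+1), and hence the residual
   F W_k - W_k = TV^k - V^k - g* is at most 8 ||W_0 - h*|| / (k+1). *)

lemma abs_le_supnorm: "\<bar>V s\<bar> \<le> supnorm (V :: 's::finite \<Rightarrow> real)"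
  unfolding supnorm_def by (rule Max_ge) auto

lemma supnorm_leI: "(\<And>s. \<bar>V s\<bar> \<le> c) \<Longrightarrow> supnorm (V :: 's::finite \<Rightarrow> real) \<le> c"
  unfolding supnorm_def by (subst Max_le_iff) auto

lemma supnorm_nonneg: "0 \<le> supnorm (V :: 's::finite \<Rightarrow> real)"
  using abs_le_supnorm[of V undefined] by linarith

lemma abs_stochastic_sum_le_supnorm:
  fixes w f :: "'s::finite \<Rightarrow> real"
  assumes "\<And>s. w s \<ge> 0" and "(\<Sum>s\<in>UNIV. w s) = 1"
  shows "\<bar>\<Sum>s\<in>UNIV. w s * f s\<bar> \<le> supnorm f"
proof -
  have "\<bar>\<Sum>s\<in>UNIV. w s * f s\<bar> \<le> (\<Sum>s\<in>UNIV. w s * \<bar>f s\<bar>)"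
    using sum_abs[of "\<lambda>s. w s * f s" UNIV] assms(1) by (simp add: abs_mult)
  also have "\<dots> \<le> (\<Sum>s\<in>UNIV. w s * supnorm f)"
    by (intro sum_mono mult_left_mono abs_le_supnorm assms(1))
  also have "\<dots> = supnorm f"
    using assms(2) by (simp add: sum_distrib_right[symmetric])
  finally show ?thesis .
qed

lemma abs_lincomb_le:
  fixes a b u v U W :: real
  assumes "a \<ge> 0" "b \<ge> 0" "\<bar>u\<bar> \<le> U" "\<bar>v\<bar> \<le> W"
  shows "\<bar>a * u + b * v\<bar> \<le> a * U + b * W"
proof -
  have "\<bar>a * u + b * v\<bar> \<le> a * \<bar>u\<bar> + b * \<bar>v\<bar>"
    using abs_triangle_ineq[of "a * u" "b * v"] assms(1,2) by (simp add: abs_mult)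
  also have "\<dots> \<le> a * U + b * W"
    using assms by (intro add_mono mult_left_mono) auto
  finally show ?thesis .
qed

definition nonexpansive :: "(('s::finite \<Rightarrow> real) \<Rightarrow> 's \<Rightarrow> real) \<Rightarrow> bool" where
  "nonexpansive F \<longleftrightarrow> (\<forall>u v s. \<bar>F u s - F v s\<bar> \<le> supnorm (\<lambda>s. u s - v s))"

lemma nonexpansiveD: "nonexpansive F \<Longrightarrow> \<bar>F u s - F v s\<bar> \<le> supnorm (\<lambda>s. u s - v s)"
  unfolding nonexpansive_def by blast

lemma Max_range_le_shift:
  fixes f g :: "'a::finite \<Rightarrow> real"
  assumes "\<And>a. f a \<le> g a + c"
  shows "Max (range f) \<le> Max (range g) + c"
proof -
  have "Max (range f) \<in> range f" by (rule Max_in) auto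
  then obtain a where "Max (range f) = f a" by blast
  moreover have "g a \<le> Max (range g)" by (rule Max_ge) auto
  ultimately show ?thesis using assms[of a] by linarith
qed

lemma nonexpansive_T_opt:
  fixes P :: "'s::finite \<Rightarrow> 'a::finite \<Rightarrow> 's \<Rightarrow> real"
  assumes "is_mdp P"
  shows "nonexpansive (T_opt P r)"
  unfolding nonexpansive_def
proof (intro allI)
  fix V U :: "'s \<Rightarrow> real" and s
  let ?N = "supnorm (\<lambda>s. V s - U s)"
  have row: "\<bar>(\<Sum>s'\<in>UNIV. P s a s' * V s') - (\<Sum>s'\<in>UNIV. P s a s' * U s')\<bar> \<le> ?N" for a
    using abs_stochastic_sum_le_supnorm[of "P s a" "\<lambda>s. V s - U s"] assms
    by (simp add: is_mdp_def sum_subtractf right_diff_distrib)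
  have "r s a + (\<Sum>s'\<in>UNIV. P s a s' * V s') \<le> r s a + (\<Sum>s'\<in>UNIV. P s a s' * U s') + ?N"
    "r s a + (\<Sum>s'\<in>UNIV. P s a s' * U s') \<le> r s a + (\<Sum>s'\<in>UNIV. P s a s' * V s') + ?N" for a
    using row[of a] unfolding abs_le_iff by linarith+
  then have "T_opt P r V s \<le> T_opt P r U s + ?N" "T_opt P r U s \<le> T_opt P r V s + ?N"
    unfolding T_opt_def by (blast intro: Max_range_le_shift)+
  then show "\<bar>T_opt P r V s - T_opt P r U s\<bar> \<le> ?N" by linarith
qed

lemma T_opt_add_invariant:
  assumes "\<And>s a. (\<Sum>s'\<in>UNIV. P s a s' * g s') = g s"
  shows "T_opt P r (\<lambda>s. W s + c * g s) = (\<lambda>s. T_opt P r W s + c * g s)"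
proof
  fix s
  have shifted: "(\<lambda>a. r s a + (\<Sum>s'\<in>UNIV. P s a s' * (W s' + c * g s')))
      = (\<lambda>a. r s a + (\<Sum>s'\<in>UNIV. P s a s' * W s') + c * g s)"
    using assms[of s] by (simp add: algebra_simps sum.distrib sum_distrib_left[symmetric])
  show "T_opt P r (\<lambda>s. W s + c * g s) s = T_opt P r W s + c * g s"
    unfolding T_opt_def shifted by (rule Max_add_commute) auto
qed

lemma action_invariant_of_policy_invariant:
  fixes P :: "'s::finite \<Rightarrow> 'a::finite \<Rightarrow> 's \<Rightarrow> real"
  assumes "\<And>\<pi>. is_policy \<pi> \<Longrightarrow> apply_P (P_pol P \<pi>) g = g"
  shows "(\<Sum>s'\<in>UNIV. P s a s' * g s') = g s"
proof -
  define \<delta> where "\<delta> = (\<lambda>(_::'s) a'. of_bool (a' = a) :: real)"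
  have "is_policy \<delta>" unfolding is_policy_def \<delta>_def by simp
  moreover have "P_pol P \<delta> = (\<lambda>s. P s a)"
    unfolding P_pol_def \<delta>_def by simp
  ultimately show ?thesis using assms by (metis apply_P_def)
qed

definition anchor_weight :: "nat \<Rightarrow> real" where
  "anchor_weight k = 2 / (real k + 2)"

lemma anchor_weight_bounds: "0 \<le> anchor_weight k" "anchor_weight k \<le> 1"
  unfolding anchor_weight_def by auto

lemma anchor_weight_antimono: "anchor_weight (Suc k) \<le> anchor_weight k"
  unfolding anchor_weight_def by (simp add: frac_le)

lemma anchor_weight_step_ineq:
  "(anchor_weight n - anchor_weight (Suc n)) * 2 + (1 - anchor_weight n) * (4 / (real n + 1))
     \<le> 4 / (real (Suc n) + 1)"
  unfolding anchor_weight_def by (simp add: divide_simps) (simp add: algebra_simps)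

lemma anchor_weight_residual_ineq:
  "anchor_weight k * 2 + (1 - anchor_weight k) * (4 / (real k + 1)) \<le> 8 / (real k + 1)"
  unfolding anchor_weight_def by (simp add: divide_simps)

locale halpern_iteration =
  fixes F :: "('s::finite \<Rightarrow> real) \<Rightarrow> 's \<Rightarrow> real"
    and h :: "'s \<Rightarrow> real"
    and x :: "nat \<Rightarrow> 's \<Rightarrow> real"
  assumes nonexp: "nonexpansive F"
    and fixed_point: "F h = h"
    and iterate: "\<And>k. k \<ge> 1 \<Longrightarrow>
      x k = (\<lambda>s. 2 / (real k + 2) * x 0 s + real k / (real k + 2) * F (x (k - 1)) s)"
begin

lemma iterate_anchor_weight:
  assumes "k \<ge> 1"
  shows "x k s = anchor_weight k * x 0 s + (1 - anchor_weight k) * F (x (k - 1)) s"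
proof -
  have "1 - anchor_weight k = real k / (real k + 2)"
    unfolding anchor_weight_def by (simp add: field_simps)
  then show ?thesis
    using iterate[OF assms] unfolding anchor_weight_def by simp
qed

lemma dist_iterate_fixed_point_le: "supnorm (\<lambda>s. x k s - h s) \<le> supnorm (\<lambda>s. x 0 s - h s)"
proof (induction k)
  case (Suc k)
  let ?D = "supnorm (\<lambda>s. x 0 s - h s)" and ?b = "anchor_weight (Suc k)"
  show ?case
  proof (rule supnorm_leI)
    fix s
    have "x (Suc k) s - h s = ?b * (x 0 s - h s) + (1 - ?b) * (F (x k) s - F h s)"
      using iterate_anchor_weight[of "Suc k" s] fixed_point by (simp add: algebra_simps)
    also have "\<bar>\<dots>\<bar> \<le> ?b * ?D + (1 - ?b) * ?D"
      using anchor_weight_bounds abs_le_supnorm nonexpansiveD[OF nonexp, of "x k" s h] Suc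
      by (intro abs_lincomb_le) (auto intro: order_trans)
    finally show "\<bar>x (Suc k) s - h s\<bar> \<le> ?D" by (simp add: algebra_simps)
  qed
qed simp

lemma dist_anchor_image_le: "\<bar>F (x k) s - x 0 s\<bar> \<le> 2 * supnorm (\<lambda>s. x 0 s - h s)"
proof -
  have "\<bar>F (x k) s - F h s\<bar> \<le> supnorm (\<lambda>s. x 0 s - h s)"
    using nonexpansiveD[OF nonexp, of "x k" s h] dist_iterate_fixed_point_le[of k] by linarith
  moreover have "\<bar>x 0 s - h s\<bar> \<le> supnorm (\<lambda>s. x 0 s - h s)"
    by (rule abs_le_supnorm)
  ultimately show ?thesis
    using fixed_point by (simp add: abs_le_iff)
qed

lemma dist_consecutive_iterates_le:
  assumes "k \<ge> 1"
  shows "supnorm (\<lambda>s. x k s - x (k - 1) s) \<le> 4 * supnorm (\<lambda>s. x 0 s - h s) / (real k + 1)"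
  using assms
proof (induction k rule: nat_induct_at_least)
  case base
  let ?D = "supnorm (\<lambda>s. x 0 s - h s)" and ?b = "anchor_weight 1"
  show ?case
  proof (rule supnorm_leI)
    fix s
    have "x 1 s - x 0 s = (1 - ?b) * (F (x 0) s - x 0 s)"
      using iterate_anchor_weight[of 1 s] by (simp add: algebra_simps)
    also have "\<bar>\<dots>\<bar> \<le> (1 - ?b) * (2 * ?D)"
      using dist_anchor_image_le[of 0 s] anchor_weight_bounds[of 1]
      by (simp add: abs_mult mult_left_mono)
    also have "\<dots> \<le> 4 * ?D / (real 1 + 1)"
      using supnorm_nonneg[of "\<lambda>s. x 0 s - h s"] by (simp add: anchor_weight_def)
    finally show "\<bar>x 1 s - x (1 - 1) s\<bar> \<le> 4 * ?D / (real 1 + 1)" by simp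
  qed
next
  case (Suc n)
  let ?D = "supnorm (\<lambda>s. x 0 s - h s)" and ?b = "anchor_weight n" and ?b' = "anchor_weight (Suc n)"
  show ?case
  proof (rule supnorm_leI)
    fix s
    have "x (Suc n) s - x n s
        = (?b - ?b') * (F (x n) s - x 0 s) + (1 - ?b) * (F (x n) s - F (x (n - 1)) s)"
      using iterate_anchor_weight[of "Suc n" s] iterate_anchor_weight[of n s] Suc.hyps
      by (simp add: algebra_simps)
    also have "\<bar>\<dots>\<bar> \<le> (?b - ?b') * (2 * ?D) + (1 - ?b) * (4 * ?D / (real n + 1))"
      using dist_anchor_image_le[of n s] anchor_weight_antimono[of n] anchor_weight_bounds[of n]
        nonexpansiveD[OF nonexp, of "x n" s "x (n - 1)"] Suc.IH
      by (intro abs_lincomb_le) auto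
    also have "\<dots> = ((?b - ?b') * 2 + (1 - ?b) * (4 / (real n + 1))) * ?D"
      by (simp add: algebra_simps)
    also have "\<dots> \<le> 4 / (real (Suc n) + 1) * ?D"
      using anchor_weight_step_ineq[of n] supnorm_nonneg[of "\<lambda>s. x 0 s - h s"]
      by (rule mult_right_mono)
    finally show "\<bar>x (Suc n) s - x (Suc n - 1) s\<bar> \<le> 4 * ?D / (real (Suc n) + 1)" by simp
  qed
qed

lemma residual_le:
  assumes "k \<ge> 1"
  shows "supnorm (\<lambda>s. F (x k) s - x k s) \<le> 8 / (real k + 1) * supnorm (\<lambda>s. x 0 s - h s)"
proof (rule supnorm_leI)
  fix s
  let ?D = "supnorm (\<lambda>s. x 0 s - h s)" and ?b = "anchor_weight k"
  have "F (x k) s - x k s = ?b * (F (x k) s - x 0 s) + (1 - ?b) * (F (x k) s - F (x (k - 1)) s)"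
    using iterate_anchor_weight[OF assms, of s] by (simp add: algebra_simps)
  also have "\<bar>\<dots>\<bar> \<le> ?b * (2 * ?D) + (1 - ?b) * (4 * ?D / (real k + 1))"
    using dist_anchor_image_le[of k s] anchor_weight_bounds[of k]
      nonexpansiveD[OF nonexp, of "x k" s "x (k - 1)"] dist_consecutive_iterates_le[OF assms]
    by (intro abs_lincomb_le) auto
  also have "\<dots> = (?b * 2 + (1 - ?b) * (4 / (real k + 1))) * ?D"
    by (simp add: algebra_simps)
  also have "\<dots> \<le> 8 / (real k + 1) * ?D"
    using anchor_weight_residual_ineq[of k] supnorm_nonneg[of "\<lambda>s. x 0 s - h s"]
    by (rule mult_right_mono)
  finally show "\<bar>F (x k) s - x k s\<bar> \<le> 8 / (real k + 1) * ?D" .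
qed

end

lemma P_pol_nonneg: "is_mdp P \<Longrightarrow> is_policy \<pi> \<Longrightarrow> P_pol P \<pi> s s' \<ge> 0"
  unfolding P_pol_def is_mdp_def is_policy_def by (auto intro: sum_nonneg)

lemma P_pol_row_sum:
  fixes P :: "'s::finite \<Rightarrow> 'a::finite \<Rightarrow> 's \<Rightarrow> real"
  assumes "is_mdp P" and "is_policy \<pi>"
  shows "(\<Sum>s'\<in>UNIV. P_pol P \<pi> s s') = 1"
proof -
  have "(\<Sum>s'\<in>UNIV. P_pol P \<pi> s s') = (\<Sum>a\<in>UNIV. \<pi> s a * (\<Sum>s'\<in>UNIV. P s a s'))"
    unfolding P_pol_def by (subst sum.swap) (simp add: sum_distrib_left)
  also have "\<dots> = 1"
    using assms by (simp add: is_mdp_def is_policy_def)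
  finally show ?thesis .
qed

definition state_expect :: "('s::finite \<Rightarrow> 'a::finite \<Rightarrow> 's \<Rightarrow> real) \<Rightarrow> ('s \<Rightarrow> 'a \<Rightarrow> real)
    \<Rightarrow> 's \<Rightarrow> nat \<Rightarrow> ('s \<Rightarrow> real) \<Rightarrow> real" where
  "state_expect P \<pi> s0 t f = (\<Sum>s\<in>UNIV. state_dist P \<pi> s0 t s * f s)"

lemma state_expect_0: "state_expect P \<pi> s0 0 f = f s0"
  unfolding state_expect_def by (simp add: of_bool_def[symmetric])

lemma state_expect_Suc:
  "state_expect P \<pi> s0 (Suc t) f = state_expect P \<pi> s0 t (apply_P (P_pol P \<pi>) f)"
proof -
  have "state_expect P \<pi> s0 (Suc t) f
      = (\<Sum>s\<in>UNIV. \<Sum>s'\<in>UNIV. state_dist P \<pi> s0 t s' * (P_pol P \<pi> s' s * f s))"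
    unfolding state_expect_def by (simp add: sum_distrib_right mult.assoc)
  also have "\<dots> = (\<Sum>s'\<in>UNIV. \<Sum>s\<in>UNIV. state_dist P \<pi> s0 t s' * (P_pol P \<pi> s' s * f s))"
    by (rule sum.swap)
  also have "\<dots> = state_expect P \<pi> s0 t (apply_P (P_pol P \<pi>) f)"
    unfolding state_expect_def apply_P_def by (simp add: sum_distrib_left)
  finally show ?thesis .
qed

lemma state_expect_add:
  "state_expect P \<pi> s0 t (\<lambda>s. f s + g s) = state_expect P \<pi> s0 t f + state_expect P \<pi> s0 t g"
  unfolding state_expect_def by (simp add: distrib_left sum.distrib)

lemma state_expect_diff:
  "state_expect P \<pi> s0 t (\<lambda>s. f s - g s) = state_expect P \<pi> s0 t f - state_expect P \<pi> s0 t g"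
  unfolding state_expect_def by (simp add: right_diff_distrib sum_subtractf)

lemma state_expect_invariant:
  assumes "apply_P (P_pol P \<pi>) g = g"
  shows "state_expect P \<pi> s0 t g = g s0"
  by (induction t) (simp_all add: state_expect_0 state_expect_Suc assms)

lemma state_dist_nonneg: "is_mdp P \<Longrightarrow> is_policy \<pi> \<Longrightarrow> state_dist P \<pi> s0 t s \<ge> 0"
  by (induction t arbitrary: s) (auto intro!: sum_nonneg mult_nonneg_nonneg P_pol_nonneg)

lemma state_dist_sum:
  fixes P :: "'s::finite \<Rightarrow> 'a::finite \<Rightarrow> 's \<Rightarrow> real"
  assumes "is_mdp P" and "is_policy \<pi>"
  shows "(\<Sum>s\<in>UNIV. state_dist P \<pi> s0 t s) = 1"
proof -
  have "state_expect P \<pi> s0 t (\<lambda>_. 1) = 1"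
    by (rule state_expect_invariant) (simp add: fun_eq_iff apply_P_def P_pol_row_sum[OF assms])
  then show ?thesis by (simp add: state_expect_def)
qed

lemma abs_state_expect_le_supnorm:
  fixes P :: "'s::finite \<Rightarrow> 'a::finite \<Rightarrow> 's \<Rightarrow> real"
  assumes "is_mdp P" and "is_policy \<pi>"
  shows "\<bar>state_expect P \<pi> s0 t f\<bar> \<le> supnorm f"
  unfolding state_expect_def
  by (rule abs_stochastic_sum_le_supnorm) (use state_dist_nonneg[OF assms] state_dist_sum[OF assms] in auto)

lemma sum_exp_reward_telescope:
  assumes inv: "apply_P (P_pol P \<pi>) g = g"
    and greedy: "T_pol P r \<pi> V = T_opt P r V"
  shows "(\<Sum>t<T. exp_reward P r \<pi> s0 t)
    = state_expect P \<pi> s0 0 V - state_expect P \<pi> s0 T V + real T * g s0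
      + (\<Sum>t<T. state_expect P \<pi> s0 t (\<lambda>s. T_opt P r V s - V s - g s))"
proof -
  let ?e = "\<lambda>s. T_opt P r V s - V s - g s"
  have "r_pol r \<pi> = (\<lambda>s. V s + g s + ?e s - apply_P (P_pol P \<pi>) V s)"
    using greedy unfolding fun_eq_iff T_pol_def by (simp add: eq_diff_eq)
  then have step: "exp_reward P r \<pi> s0 t
      = state_expect P \<pi> s0 t V + g s0 + state_expect P \<pi> s0 t ?e - state_expect P \<pi> s0 (Suc t) V" for t
    unfolding exp_reward_def state_expect_def[symmetric]
    by (simp add: state_expect_add state_expect_diff state_expect_invariant[OF inv] state_expect_Suc)
  show ?thesis
    by (induction T) (simp_all add: step distrib_right)
qed

lemma abs_real_liminf_diff_le:
  fixes a :: "nat \<Rightarrow> real"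
  assumes "\<And>T. T \<ge> 1 \<Longrightarrow> \<bar>a T - c\<bar> \<le> B / real T + E"
  shows "\<bar>real_of_ereal (liminf (\<lambda>T. ereal (a T))) - c\<bar> \<le> E"
proof -
  let ?L = "liminf (\<lambda>T. ereal (a T))"
  have "c - (E + \<epsilon>) \<le> real_of_ereal ?L \<and> real_of_ereal ?L \<le> c + (E + \<epsilon>)" if "\<epsilon> > 0" for \<epsilon>
  proof -
    have "eventually (\<lambda>T. B / real T < \<epsilon>) sequentially"
      using lim_const_over_n[of B] \<open>\<epsilon> > 0\<close> by (rule order_tendstoD(2))
    then have near: "eventually (\<lambda>T. \<bar>a T - c\<bar> \<le> E + \<epsilon>) sequentially"
      using eventually_ge_at_top[of 1]
    proof eventually_elim
      case (elim T)
      then show ?case using assms[of T] by linarith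
    qed
    have "?L \<le> limsup (\<lambda>T. ereal (a T))"
      by (rule Liminf_le_Limsup) simp
    also have "\<dots> \<le> ereal (c + (E + \<epsilon>))"
      by (rule Limsup_bounded) (use near in \<open>auto elim!: eventually_mono simp: abs_le_iff\<close>)
    finally have "?L \<le> ereal (c + (E + \<epsilon>))" .
    moreover have "ereal (c - (E + \<epsilon>)) \<le> ?L"
      by (rule Liminf_bounded) (use near in \<open>auto elim!: eventually_mono simp: abs_le_iff\<close>)
    ultimately show ?thesis
      by (cases ?L) auto
  qed
  then show ?thesis
    unfolding abs_le_iff by (smt (verit) field_le_epsilon)
qed

lemma abs_gain_diff_le_residual:
  fixes P :: "'s::finite \<Rightarrow> 'a::finite \<Rightarrow> 's \<Rightarrow> real"
  assumes mdp: "is_mdp P" and pol: "is_policy \<pi>"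
    and inv: "apply_P (P_pol P \<pi>) g = g"
    and greedy: "T_pol P r \<pi> V = T_opt P r V"
  shows "\<bar>g s0 - gain P r \<pi> s0\<bar> \<le> supnorm (\<lambda>s. T_opt P r V s - V s - g s)"
proof -
  let ?e = "\<lambda>s. T_opt P r V s - V s - g s" and ?E = "state_expect P \<pi> s0"
  have "\<bar>(1 / real T) * (\<Sum>t<T. exp_reward P r \<pi> s0 t) - g s0\<bar>
      \<le> 2 * supnorm V / real T + supnorm ?e" if "T \<ge> 1" for T
  proof -
    let ?X = "?E 0 V - ?E T V + (\<Sum>t<T. ?E t ?e)"
    have "\<bar>?E 0 V - ?E T V\<bar> \<le> 2 * supnorm V"
      using abs_state_expect_le_supnorm[OF mdp pol, of s0 0 V]
        abs_state_expect_le_supnorm[OF mdp pol, of s0 T V]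
      by linarith
    moreover have "\<bar>\<Sum>t<T. ?E t ?e\<bar> \<le> (\<Sum>t<T. \<bar>?E t ?e\<bar>)"
      by (rule sum_abs)
    moreover have "\<dots> \<le> real T * supnorm ?e"
      using sum_mono[of "{..<T}" "\<lambda>t. \<bar>?E t ?e\<bar>" "\<lambda>_. supnorm ?e"]
        abs_state_expect_le_supnorm[OF mdp pol] by simp
    ultimately have X_le: "\<bar>?X\<bar> \<le> 2 * supnorm V + real T * supnorm ?e"
      by linarith
    have "(1 / real T) * (\<Sum>t<T. exp_reward P r \<pi> s0 t) - g s0 = ?X / real T"
      using that by (simp add: sum_exp_reward_telescope[OF inv greedy] field_simps)
    then have "\<bar>(1 / real T) * (\<Sum>t<T. exp_reward P r \<pi> s0 t) - g s0\<bar> = \<bar>?X\<bar> / real T"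
      by (simp add: abs_divide)
    also have "\<dots> \<le> (2 * supnorm V + real T * supnorm ?e) / real T"
      using X_le by (rule divide_right_mono) simp
    also have "\<dots> = 2 * supnorm V / real T + supnorm ?e"
      using that by (simp add: add_divide_distrib)
    finally show ?thesis .
  qed
  then have "\<bar>gain P r \<pi> s0 - g s0\<bar> \<le> supnorm ?e"
    unfolding gain_def by (rule abs_real_liminf_diff_le)
  then show ?thesis by (simp add: abs_minus_commute)
qed

(* The coefficient c_k of g picked up by V k obeys c_k = k/(k+2) (c_(k-1) + 1), c_0 = 0,
   whose solution is c_k = k/3. *)
lemma halpern_iteration_relative_gain:
  fixes T :: "('s::finite \<Rightarrow> real) \<Rightarrow> 's \<Rightarrow> real"
  assumes nonexp: "nonexpansive T"
    and shift: "\<And>W c. T (\<lambda>s. W s + c * g s) = (\<lambda>s. T W s + c * g s)"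
    and fixed: "T h = (\<lambda>s. h s + g s)"
    and iterate: "\<And>k. k \<ge> 1 \<Longrightarrow>
      V k = (\<lambda>s. 2 / (real k + 2) * V 0 s + real k / (real k + 2) * T (V (k - 1)) s)"
  shows "halpern_iteration (\<lambda>W s. T W s - g s) h (\<lambda>k s. V k s - real k / 3 * g s)"
proof
  show "nonexpansive (\<lambda>W s. T W s - g s)"
    using nonexp unfolding nonexpansive_def by simp
  show "(\<lambda>s. T h s - g s) = h"
    using fixed by simp
  fix k :: nat
  assume k: "k \<ge> 1"
  have shifted: "T (\<lambda>s. V (k - 1) s - real (k - 1) / 3 * g s)
      = (\<lambda>s. T (V (k - 1)) s - (real k - 1) / 3 * g s)"
    using shift[of "V (k - 1)" "- (real (k - 1) / 3)"] k by (simp add: of_nat_diff)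
  show "(\<lambda>s. V k s - real k / 3 * g s) = (\<lambda>s. 2 / (real k + 2) * (V 0 s - real 0 / 3 * g s)
      + real k / (real k + 2) * (T (\<lambda>s. V (k - 1) s - real (k - 1) / 3 * g s) s - g s))"
  proof
    fix s
    have "real k / (real k + 2) * ((real k - 1) / 3 * g s + g s) = real k / 3 * g s"
      by (simp add: field_simps)
    then show "V k s - real k / 3 * g s = 2 / (real k + 2) * (V 0 s - real 0 / 3 * g s)
        + real k / (real k + 2) * (T (\<lambda>s. V (k - 1) s - real (k - 1) / 3 * g s) s - g s)"
      unfolding shifted iterate[OF k] diff_diff_eq right_diff_distrib[of "real k / (real k + 2)"]
      by simp
  qed
qed

lemma residual_relative_gain_le:
  fixes T :: "('s::finite \<Rightarrow> real) \<Rightarrow> 's \<Rightarrow> real"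
  assumes nonexp: "nonexpansive T"
    and shift: "\<And>W c. T (\<lambda>s. W s + c * g s) = (\<lambda>s. T W s + c * g s)"
    and fixed: "T h = (\<lambda>s. h s + g s)"
    and iterate: "\<And>k. k \<ge> 1 \<Longrightarrow>
      V k = (\<lambda>s. 2 / (real k + 2) * V 0 s + real k / (real k + 2) * T (V (k - 1)) s)"
    and k: "k \<ge> 1"
  shows "supnorm (\<lambda>s. T (V k) s - V k s - g s) \<le> 8 / (real k + 1) * supnorm (\<lambda>s. V 0 s - h s)"
proof -
  interpret halpern_iteration "\<lambda>W s. T W s - g s" h "\<lambda>k s. V k s - real k / 3 * g s"
    by (rule halpern_iteration_relative_gain[OF nonexp shift fixed iterate])
  have "T (\<lambda>s. V k s - real k / 3 * g s) = (\<lambda>s. T (V k) s - real k / 3 * g s)"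
    using shift[of "V k" "- (real k / 3)"] by simp
  then have residual: "(\<lambda>s. T (\<lambda>s. V k s - real k / 3 * g s) s - g s - (V k s - real k / 3 * g s))
      = (\<lambda>s. T (V k) s - V k s - g s)"
    by (simp add: fun_eq_iff)
  show ?thesis
    using residual_le[OF k] unfolding residual by simp
qed

theorem corollary2:
  fixes P :: "'s::finite \<Rightarrow> 'a::finite \<Rightarrow> 's \<Rightarrow> real"
    and r :: "'s \<Rightarrow> 'a \<Rightarrow> real"
    and h :: "'s \<Rightarrow> real"
    and V :: "nat \<Rightarrow> 's \<Rightarrow> real"
    and \<pi>k :: "nat \<Rightarrow> 's \<Rightarrow> 'a \<Rightarrow> real"
  assumes mdp: "is_mdp P"
    and inv: "\<And>\<pi>. is_policy \<pi> \<Longrightarrow> apply_P (P_pol P \<pi>) (opt_gain P r) = opt_gain P r"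
    and bell: "modified_bellman P r (opt_gain P r) h"
    and V_rec: "\<And>k. k \<ge> 1 \<Longrightarrow>
        V k = (\<lambda>s. 2 / (real k + 2) * V 0 s + real k / (real k + 2) * T_opt P r (V (k - 1)) s)"
    and greedy_pol: "\<And>k. k \<ge> 1 \<Longrightarrow> is_policy (\<pi>k k)"
    and greedy: "\<And>k. k \<ge> 1 \<Longrightarrow> T_pol P r (\<pi>k k) (V k) = T_opt P r (V k)"
    and k: "k \<ge> 1"
  shows "supnorm (\<lambda>s. opt_gain P r s - gain P r (\<pi>k k) s)
           \<le> supnorm (\<lambda>s. T_opt P r (V k) s - V k s - opt_gain P r s)
       \<and> supnorm (\<lambda>s. T_opt P r (V k) s - V k s - opt_gain P r s)
           \<le> 8 / (real k + 1) * supnorm (\<lambda>s. V 0 s - h s)"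
proof
  show "supnorm (\<lambda>s. opt_gain P r s - gain P r (\<pi>k k) s)
      \<le> supnorm (\<lambda>s. T_opt P r (V k) s - V k s - opt_gain P r s)"
    by (rule supnorm_leI)
      (rule abs_gain_diff_le_residual[OF mdp greedy_pol[OF k] inv[OF greedy_pol[OF k]] greedy[OF k]])
  have "\<And>s a. (\<Sum>s'\<in>UNIV. P s a s' * opt_gain P r s') = opt_gain P r s"
    using inv by (rule action_invariant_of_policy_invariant)
  then have shift: "\<And>W c. T_opt P r (\<lambda>s. W s + c * opt_gain P r s)
      = (\<lambda>s. T_opt P r W s + c * opt_gain P r s)"
    by (rule T_opt_add_invariant)
  have fixed: "T_opt P r h = (\<lambda>s. h s + opt_gain P r s)"
    using bell unfolding modified_bellman_def T_opt_def by auto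
  show "supnorm (\<lambda>s. T_opt P r (V k) s - V k s - opt_gain P r s)
      \<le> 8 / (real k + 1) * supnorm (\<lambda>s. V 0 s - h s)"
    by (rule residual_relative_gain_le[OF nonexpansive_T_opt[OF mdp] shift fixed V_rec k])
qed

end
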